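(* Fix reals $0<\varepsilon<1$ and $c\ge 12/\varepsilon$, and let $S$ and the squares $Q_n$ be as produced by the construction described in the context (with any choices allowed there). Call a lattice point of $Q_n$ red if it lies on a common line with two points of $S\cap Q_m$ for some $m<n$. Then for all sufficiently large $n$, the number of red points in $Q_n$ is at most $$\sum_{m<n}\frac{8\cdot2^{m+n}}{c^{3}n^{2+2\varepsilon}m^{1+\varepsilon}}\cdot n<\frac{16\cdot2^{n+n}}{c^{3}n^{2+2\varepsilon}n^{1+\varepsilon}}\cdot n,$$ where the sum runs over those $m<n$ for which $Q_m$ is defined.
   Context: Construction. Fix $0<\varepsilon<1$ and $c\ge 12/\varepsilon$. For each sufficiently large integer $n$ (say $n\ge n_0$), let $s_n=\left\lfloor\frac{2^n}{cn^{1+\varepsilon}}\right\rfloor$, $Y_n=\left\lfloor\frac{2^n}{n^{\varepsilon}}\right\rfloor$, and let $Q_n=[2^n,2^n+s_n]\times[Y_n-s_n,Y_n]$ be the axis-parallel square with side $s_n$ and top left corner $(2^n,Y_n)$. Let $p_n$ be the largest prime smaller than $s_n$. For integers $a,b$, let $\mathcal{P}_n(a,b)=\{(2^n+x,\;Y_n-y): x,y\in\{0,\dots,p_n-1\},\ y\equiv (x-a)^2+b \pmod{p_n}\}$, a translated copy of the modular parabola $y=(x-a)^2+b \bmod p_n$ in $Q_n$. The set $S\subseteq\mathbb{Z}^2$ is built iteratively for $n=n_0,n_0+1,\dots$: given the already selected points $S_{<n}=S\cap\bigcup_{m<n}Q_m$, choose parameters $(a_n,b_n)\in\{0,\dots,p_n-1\}^2$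 minimizing the number of collinear triples formed by points of $\mathcal{P}_n(a_n,b_n)\cup S_{<n}$ that contain points of both $\mathcal{P}_n(a_n,b_n)$ and $S_{<n}$; delete from $\mathcal{P}_n=\mathcal{P}_n(a_n,b_n)$ one point of each such triple, and add the remaining points of $\mathcal{P}_n$ to $S$. Thus $S\cap Q_n\subseteq\mathcal{P}_n$. *)

theory Defs
  imports "HOL-Analysis.Analysis" "HOL-Computational_Algebra.Primes"
begin

type_synonym pt = "int \<times> int"

definition side :: "real \<Rightarrow> real \<Rightarrow> nat \<Rightarrow> nat" where
  "side eps c n = nat \<lfloor>2 ^ n / (c * real n powr (1 + eps))\<rfloor>"

definition Ytop :: "real \<Rightarrow> nat \<Rightarrow> int" where
  "Ytop eps n = \<lfloor>2 ^ n / real n powr eps\<rfloor>"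

definition Qsq :: "real \<Rightarrow> real \<Rightarrow> nat \<Rightarrow> pt set" where
  "Qsq eps c n = {(x, y). 2 ^ n \<le> x \<and> x \<le> 2 ^ n + int (side eps c n) \<and>
      Ytop eps n - int (side eps c n) \<le> y \<and> y \<le> Ytop eps n}"

definition pr :: "real \<Rightarrow> real \<Rightarrow> nat \<Rightarrow> nat" where
  "pr eps c n = (GREATEST q. prime q \<and> q < side eps c n)"

definition parab :: "real \<Rightarrow> real \<Rightarrow> nat \<Rightarrow> int \<Rightarrow> int \<Rightarrow> pt set" where
  "parab eps c n a b = {(2 ^ n + x, Ytop eps n - y) | x y.
      0 \<le> x \<and> x < int (pr eps c n) \<and> 0 \<le> y \<and> y < int (pr eps c n) \<and>
      y mod int (pr eps c n) = ((x - a) ^ 2 + b) mod int (pr eps c n)}"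

definition collinear3 :: "pt \<Rightarrow> pt \<Rightarrow> pt \<Rightarrow> bool" where
  "collinear3 p q r \<longleftrightarrow>
     (fst q - fst p) * (snd r - snd p) = (snd q - snd p) * (fst r - fst p)"

definition mixed_triples :: "pt set \<Rightarrow> pt set \<Rightarrow> pt set set" where
  "mixed_triples A B = {T. T \<subseteq> A \<union> B \<and> card T = 3 \<and>
      (\<exists>p q r. T = {p, q, r} \<and> collinear3 p q r) \<and> T \<inter> A \<noteq> {} \<and> T \<inter> B \<noteq> {}}"

definition S_before :: "real \<Rightarrow> real \<Rightarrow> nat \<Rightarrow> pt set \<Rightarrow> nat \<Rightarrow> pt set" where
  "S_before eps c n0 S n = S \<inter> (\<Union>m\<in>{n0..<n}. Qsq eps c m)"

definition valid_construction ::
  "real \<Rightarrow> real \<Rightarrow> nat \<Rightarrow> (nat \<Rightarrow> int) \<Rightarrow> (nat \<Rightarrow> int) \<Rightarrow> pt set \<Rightarrow> bool" where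
  "valid_construction eps c n0 a b S \<longleftrightarrow>
     S \<subseteq> (\<Union>n\<in>{n0..}. Qsq eps c n) \<and>
     (\<forall>n\<ge>n0.
        0 \<le> a n \<and> a n < int (pr eps c n) \<and> 0 \<le> b n \<and> b n < int (pr eps c n) \<and>
        (\<forall>a' b'. 0 \<le> a' \<and> a' < int (pr eps c n) \<and> 0 \<le> b' \<and> b' < int (pr eps c n) \<longrightarrow>
           card (mixed_triples (parab eps c n (a n) (b n)) (S_before eps c n0 S n))
             \<le> card (mixed_triples (parab eps c n a' b') (S_before eps c n0 S n))) \<and>
        (\<exists>f. (\<forall>T\<in>mixed_triples (parab eps c n (a n) (b n)) (S_before eps c n0 S n).
                  f T \<in> T \<inter> parab eps c n (a n) (b n)) \<and>
             S \<inter> Qsq eps c n = parab eps c n (a n) (b n)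
               - f ` mixed_triples (parab eps c n (a n) (b n)) (S_before eps c n0 S n)))"

definition red :: "real \<Rightarrow> real \<Rightarrow> pt set \<Rightarrow> nat \<Rightarrow> pt set" where
  "red eps c S n = {z \<in> Qsq eps c n. \<exists>m<n. \<exists>u v.
      u \<in> S \<inter> Qsq eps c m \<and> v \<in> S \<inter> Qsq eps c m \<and> u \<noteq> v \<and> collinear3 z u v}"

end

theory Submission
  imports Defs "HOL-Analysis.Harmonic_Numbers" "HOL-Real_Asymp.Real_Asymp"
begin

text \<open>The points of S in Q_m lie on a modular parabola y = (x - a)^2 + b mod p_m, on which a chord
  is determined by its difference vector.  A line through two of them that meets Q_n has its slope
  in a window near n^-eps of width O(s_n / 2^n).  Writing its direction as a primitive vector
  (k, j) with k < p_m, there are at most p_m / k such lines per direction, each meeting Q_n in at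
  most s_n / k + 1 points.  Summing over the primitive directions in the window (by Farey spacing
  only (hi - lo) K^2 + 1 of them have k < K, and at most k (hi - lo) + 1 have a given larger k)
  bounds the red points coming from Q_m by O(s_m s_n^2 n / 2^n), and the sum over m < n is
  dominated by its last terms.\<close>

section \<open>Chords of a modular parabola\<close>

definition mod_parabola :: "nat \<Rightarrow> int \<Rightarrow> int \<Rightarrow> int \<Rightarrow> int \<Rightarrow> pt set" where
  "mod_parabola p X0 Y0 a b = {(X0 + x, Y0 - y) | x y.
      0 \<le> x \<and> x < int p \<and> 0 \<le> y \<and> y < int p \<and> y mod int p = ((x - a)^2 + b) mod int p}"

lemma parab_eq_mod_parabola: "parab eps c n a b = mod_parabola (pr eps c n) (2 ^ n) (Ytop eps n) a b"
  unfolding parab_def mod_parabola_def ..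

lemma mem_mod_parabola_iff:
  "(X, Y) \<in> mod_parabola p X0 Y0 a b \<longleftrightarrow>
     0 \<le> X - X0 \<and> X - X0 < int p \<and> 0 \<le> Y0 - Y \<and> Y0 - Y < int p \<and>
     (Y0 - Y) mod int p = ((X - X0 - a)^2 + b) mod int p"
proof
  assume "(X, Y) \<in> mod_parabola p X0 Y0 a b"
  then show "0 \<le> X - X0 \<and> X - X0 < int p \<and> 0 \<le> Y0 - Y \<and> Y0 - Y < int p \<and>
     (Y0 - Y) mod int p = ((X - X0 - a)^2 + b) mod int p"
    unfolding mod_parabola_def by auto
next
  assume "0 \<le> X - X0 \<and> X - X0 < int p \<and> 0 \<le> Y0 - Y \<and> Y0 - Y < int p \<and>
     (Y0 - Y) mod int p = ((X - X0 - a)^2 + b) mod int p"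
  then show "(X, Y) \<in> mod_parabola p X0 Y0 a b"
    unfolding mod_parabola_def by (intro CollectI exI[of _ "X - X0"] exI[of _ "Y0 - Y"]) simp
qed

lemma mod_parabola_fst_bounds: "u \<in> mod_parabola p X0 Y0 a b \<Longrightarrow> X0 \<le> fst u \<and> fst u < X0 + int p"
  unfolding mod_parabola_def by auto

text \<open>Since (x + dx - a)^2 - (x - a)^2 = 2 dx (x - a) + dx^2 and 2 dx is a unit modulo p,
  the vertical offset dy of a chord with horizontal offset dx determines x modulo p.\<close>
lemma parabola_chord_determines_x:
  fixes p :: nat and a b x x' y y' dx dy :: int
  assumes "prime p" "\<not> int p dvd 2 * dx"
    and "y mod p = ((x - a)^2 + b) mod p" "(y - dy) mod p = ((x + dx - a)^2 + b) mod p"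
    and "y' mod p = ((x' - a)^2 + b) mod p" "(y' - dy) mod p = ((x' + dx - a)^2 + b) mod p"
  shows "x mod p = x' mod p"
proof -
  have "int p dvd y - ((x - a)^2 + b)" "int p dvd (y - dy) - ((x + dx - a)^2 + b)"
    "int p dvd y' - ((x' - a)^2 + b)" "int p dvd (y' - dy) - ((x' + dx - a)^2 + b)"
    using assms(3-6) by (simp_all add: mod_eq_dvd_iff)
  note e = this
  have "int p dvd (y - ((x - a)^2 + b)) - ((y - dy) - ((x + dx - a)^2 + b))
              - ((y' - ((x' - a)^2 + b)) - ((y' - dy) - ((x' + dx - a)^2 + b)))"
    using dvd_diff[OF dvd_diff[OF e(1,2)] dvd_diff[OF e(3,4)]] .
  also have "\<dots> = 2 * dx * (x - x')"
    by (simp add: power2_eq_square algebra_simps)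
  finally have "int p dvd 2 * dx * (x - x')" .
  then have "int p dvd x - x'"
    using assms(1,2) prime_dvd_mult_iff[of "int p"] by simp
  then show ?thesis by (simp add: mod_eq_dvd_iff)
qed

lemma mod_parabola_chord_unique:
  assumes p: "prime p" and dx: "2 \<le> dx" "dx < int p"
    and "u \<in> mod_parabola p X0 Y0 a b" "(fst u + dx, snd u + dy) \<in> mod_parabola p X0 Y0 a b"
    and "v \<in> mod_parabola p X0 Y0 a b" "(fst v + dx, snd v + dy) \<in> mod_parabola p X0 Y0 a b"
  shows "u = v"
proof -
  have unit: "\<not> int p dvd 2 * dx"
  proof
    assume "int p dvd 2 * dx"
    then have "int p dvd 2 \<or> int p dvd dx" using p prime_dvd_mult_iff[of "int p"] by simp
    then show False using dx by (auto dest: zdvd_imp_le)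
  qed
  obtain X Y X' Y' where uv: "u = (X, Y)" "v = (X', Y')" by (cases u, cases v)
  note mem = assms(4-7)[unfolded uv fst_conv snd_conv mem_mod_parabola_iff]
  have "(X - X0) mod int p = (X' - X0) mod int p"
    by (rule parabola_chord_determines_x[OF p unit,
          where y = "Y0 - Y" and y' = "Y0 - Y'" and dy = dy and a = a and b = b])
      (use mem in \<open>simp_all add: algebra_simps\<close>)
  then have "X = X'" using mem by simp
  have "0 \<le> Y0 - Y" "Y0 - Y < int p" "0 \<le> Y0 - Y'" "Y0 - Y' < int p"
    and "(Y0 - Y) mod int p = (Y0 - Y') mod int p" using mem \<open>X = X'\<close> by auto
  then have "Y = Y'" by (metis mod_pos_pos_trivial diff_left_imp_eq)
  with \<open>X = X'\<close> show ?thesis using uv by simp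
qed

section \<open>Lattice lines\<close>

lemma collinear3_swap: "collinear3 z u v \<longleftrightarrow> collinear3 z v u"
  unfolding collinear3_def by (metis mult.commute)

lemma collinear3_vertical_eq:
  assumes "collinear3 z u v" "fst u = fst v" "fst u \<noteq> fst z"
  shows "u = v"
proof -
  have "(fst u - fst z) * (snd v - snd u) = 0"
    using assms(1,2) unfolding collinear3_def by (simp add: algebra_simps)
  then show ?thesis using assms(2,3) by (simp add: prod_eq_iff)
qed

lemma collinear3_primitive_direction:
  assumes "fst u < fst v" "collinear3 z u v"
  obtains k j t r where "0 < k" "coprime k j" "0 < t"
    "v = (fst u + t * k, snd u + t * j)" "z = (fst u + r * k, snd u + r * j)"
proof -
  define dx dy where "dx = fst v - fst u" and "dy = snd v - snd u"
  define t where "t = gcd dx dy"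
  define k j where "k = dx div t" and "j = dy div t"
  have dx0: "0 < dx" using assms(1) dx_def by simp
  then have t0: "0 < t" by (simp add: t_def)
  have dx: "dx = t * k" and dy: "dy = t * j" by (simp_all add: k_def j_def t_def)
  have cop: "coprime k j" using div_gcd_coprime[of dx dy] dx0 by (simp add: k_def j_def t_def)
  have k0: "0 < k" using dx0 t0 dx by (simp add: zero_less_mult_iff)
  have "(fst z - fst u) * dy = (snd z - snd u) * dx"
    using assms(2) unfolding collinear3_def dx_def dy_def by (simp add: algebra_simps)
  then have "t * ((fst z - fst u) * j) = t * ((snd z - snd u) * k)"
    by (simp add: dx dy algebra_simps)
  then have eq: "(fst z - fst u) * j = (snd z - snd u) * k"
    using t0 by simp
  then have "k dvd (fst z - fst u) * j" by simp
  then obtain r where r: "fst z - fst u = k * r" using cop by (auto simp: coprime_dvd_mult_left_iff elim: dvdE)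
  then have "k * (snd z - snd u) = k * (r * j)" using eq by (simp add: algebra_simps)
  then have "snd z - snd u = r * j" using k0 by simp
  then have "z = (fst u + r * k, snd u + r * j)" using r by (cases z) (simp add: algebra_simps)
  moreover have "v = (fst u + t * k, snd u + t * j)" using dx dy dx_def dy_def by (cases v) simp
  ultimately show thesis using that k0 cop t0 by blast
qed

lemma card_lattice_line_strip_le:
  fixes k :: int and s :: nat
  assumes k: "0 < k"
    and L: "\<And>z. z \<in> L \<Longrightarrow> (\<exists>r. z = (fst u + r * k, snd u + r * j)) \<and> X \<le> fst z \<and> fst z \<le> X + int s"
  shows "real (card L) \<le> real s / real_of_int k + 1"
proof -
  define \<phi> where "\<phi> z = (fst z - X) div k" for z :: pt
  have \<phi>: "\<phi> (fst u + r * k, snd u + r * j) = (fst u - X) div k + r" for r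
  proof -
    have "\<phi> (fst u + r * k, snd u + r * j) = (fst u - X + r * k) div k"
      unfolding \<phi>_def by (simp add: algebra_simps)
    then show ?thesis using k by simp
  qed
  have "inj_on \<phi> L"
  proof
    fix z z' assume "z \<in> L" "z' \<in> L" "\<phi> z = \<phi> z'"
    moreover obtain r r' where "z = (fst u + r * k, snd u + r * j)" "z' = (fst u + r' * k, snd u + r' * j)"
      using L \<open>z \<in> L\<close> \<open>z' \<in> L\<close> by blast
    ultimately show "z = z'" using \<phi> by simp
  qed
  moreover have "\<phi> ` L \<subseteq> {0..int s div k}"
  proof (rule image_subsetI)
    fix z assume "z \<in> L"
    then have "0 \<le> fst z - X" "fst z - X \<le> int s" using L[of z] by auto
    then show "\<phi> z \<in> {0..int s div k}" using k by (simp add: \<phi>_def zdiv_mono1 pos_imp_zdiv_nonneg_iff)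
  qed
  ultimately have "card L \<le> card {0..int s div k}"
    by (metis card_image card_mono finite_atLeastAtMost_int)
  moreover have "0 \<le> int s div k" using k by (simp add: pos_imp_zdiv_nonneg_iff)
  ultimately have "real (card L) \<le> real_of_int (int s div k) + 1"
    by (simp add: nat_le_iff of_nat_le_iff[symmetric, where 'a = real])
  also have "real_of_int (int s div k) \<le> real s / real_of_int k"
    by (metis floor_divide_of_int_eq of_int_floor_le of_int_of_nat_eq)
  finally show ?thesis by simp
qed

section \<open>Secants with slopes in a window\<close>

definition slope :: "pt \<Rightarrow> pt \<Rightarrow> real" where
  "slope u z = real_of_int (snd z - snd u) / real_of_int (fst z - fst u)"

definition slope_dirs :: "nat \<Rightarrow> real \<Rightarrow> real \<Rightarrow> (int \<times> int) set" where
  "slope_dirs p lo hi = {(k, j). 1 \<le> k \<and> k < int p \<and> coprime k j \<and>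
     lo \<le> real_of_int j / real_of_int k \<and> real_of_int j / real_of_int k \<le> hi}"

lemma slope_dirsD:
  assumes "(k, j) \<in> slope_dirs p lo hi" "0 < lo" "hi < 1"
  shows "2 \<le> k" "1 \<le> j" "j < k" "k < int p" "coprime k j"
    "lo \<le> real_of_int j / real_of_int k" "real_of_int j / real_of_int k \<le> hi"
proof -
  have k: "1 \<le> k" "k < int p" and "coprime k j"
    and slope: "lo \<le> real_of_int j / real_of_int k" "real_of_int j / real_of_int k \<le> hi"
    using assms(1) unfolding slope_dirs_def by auto
  then show "k < int p" "coprime k j" "lo \<le> real_of_int j / real_of_int k"
    "real_of_int j / real_of_int k \<le> hi" by auto
  have "0 < real_of_int j / real_of_int k" "real_of_int j / real_of_int k < 1"
    using slope assms(2,3) by linarith+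
  then show "1 \<le> j" "j < k" using k by (simp_all add: zero_less_divide_iff divide_less_eq)
  then show "2 \<le> k" by simp
qed

lemma finite_slope_dirs:
  assumes "0 < lo" "hi < 1"
  shows "finite (slope_dirs p lo hi)"
proof (rule finite_subset)
  show "slope_dirs p lo hi \<subseteq> {1..int p} \<times> {1..int p}"
  proof (rule subrelI)
    fix k j assume "(k, j) \<in> slope_dirs p lo hi"
    from slope_dirsD[OF this assms] show "(k, j) \<in> {1..int p} \<times> {1..int p}" by simp
  qed
qed simp

definition secant_points :: "pt set \<Rightarrow> pt set \<Rightarrow> pt set" where
  "secant_points P Q = {z \<in> Q. \<exists>u\<in>P. \<exists>v\<in>P. u \<noteq> v \<and> collinear3 z u v}"

lemma red_eq_Union_secant_points:
  "red eps c S n = (\<Union>m<n. secant_points (S \<inter> Qsq eps c m) (Qsq eps c n))"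
  unfolding red_def secant_points_def by blast

definition secant_line_points :: "pt set \<Rightarrow> pt set \<Rightarrow> int \<Rightarrow> int \<Rightarrow> int \<Rightarrow> pt set" where
  "secant_line_points P Q k j t = {z \<in> Q. \<exists>u\<in>P. (fst u + t * k, snd u + t * j) \<in> P \<and>
     (\<exists>r. z = (fst u + r * k, snd u + r * j))}"

lemma secant_point_mem_lines:
  assumes P: "P \<subseteq> mod_parabola p X0 Y0 a b"
    and slopes: "\<And>u z. u \<in> P \<Longrightarrow> z \<in> Q \<Longrightarrow> fst u < fst z \<and> lo \<le> slope u z \<and> slope u z \<le> hi"
    and z: "z \<in> Q" and u: "u \<in> P" and v: "v \<in> P" and lt: "fst u < fst v" and col: "collinear3 z u v"
  shows "z \<in> (\<Union>(k, j)\<in>slope_dirs p lo hi. \<Union>t\<in>{1..(int p - 1) div k}. secant_line_points P Q k j t)"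
proof -
  obtain k j t r where k: "0 < k" and cop: "coprime k j" and t: "0 < t"
    and v_eq: "v = (fst u + t * k, snd u + t * j)" and z_eq: "z = (fst u + r * k, snd u + r * j)"
    using collinear3_primitive_direction[OF lt col] by blast
  have "0 < r * k" using slopes[OF u z] z_eq by simp
  then have "r \<noteq> 0" by auto
  then have "slope u z = real_of_int j / real_of_int k"
    unfolding slope_def z_eq by simp
  moreover have tk: "t * k \<le> int p - 1"
    using mod_parabola_fst_bounds[OF subsetD[OF P u]] mod_parabola_fst_bounds[OF subsetD[OF P v]] v_eq
    by simp
  moreover have "k < int p" using tk t k by (smt (verit) mult_le_cancel_right1)
  ultimately have "(k, j) \<in> slope_dirs p lo hi"
    using slopes[OF u z] k cop unfolding slope_dirs_def by auto
  moreover have "t \<le> (int p - 1) div k"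
    using zdiv_mono1[OF tk k] k by simp
  moreover have "z \<in> secant_line_points P Q k j t"
    unfolding secant_line_points_def using z u v v_eq z_eq by blast
  ultimately show ?thesis using t by force
qed

lemma secant_points_subset_lines:
  assumes P: "P \<subseteq> mod_parabola p X0 Y0 a b"
    and slopes: "\<And>u z. u \<in> P \<Longrightarrow> z \<in> Q \<Longrightarrow> fst u < fst z \<and> lo \<le> slope u z \<and> slope u z \<le> hi"
  shows "secant_points P Q \<subseteq>
    (\<Union>(k, j)\<in>slope_dirs p lo hi. \<Union>t\<in>{1..(int p - 1) div k}. secant_line_points P Q k j t)"
proof
  fix z assume "z \<in> secant_points P Q"
  then obtain u v where z: "z \<in> Q" and uv: "u \<in> P" "v \<in> P" "u \<noteq> v" and col: "collinear3 z u v"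
    unfolding secant_points_def by blast
  have "fst u \<noteq> fst v"
  proof
    assume eq: "fst u = fst v"
    have "fst u \<noteq> fst z" using slopes[OF uv(1) z] by simp
    with uv(3) show False using collinear3_vertical_eq[OF col eq] by simp
  qed
  then consider "fst u < fst v" | "fst v < fst u" by linarith
  then show "z \<in> (\<Union>(k, j)\<in>slope_dirs p lo hi. \<Union>t\<in>{1..(int p - 1) div k}. secant_line_points P Q k j t)"
  proof cases
    case 1
    from secant_point_mem_lines[OF P slopes z uv(1,2) this col] show ?thesis .
  next
    case 2
    from secant_point_mem_lines[OF P slopes z uv(2,1) this collinear3_swap[THEN iffD1, OF col]]
    show ?thesis .
  qed
qed

lemma card_secant_line_points_le:
  fixes s :: nat
  assumes p: "prime p" and P: "P \<subseteq> mod_parabola p X0 Y0 a b"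
    and Q: "\<And>z. z \<in> Q \<Longrightarrow> X \<le> fst z \<and> fst z \<le> X + int s"
    and k: "2 \<le> k" and t: "0 < t" "t * k < int p"
  shows "real (card (secant_line_points P Q k j t)) \<le> real s / real_of_int k + 1"
proof (cases "secant_line_points P Q k j t = {}")
  case False
  then obtain u0 where u0: "u0 \<in> P" "(fst u0 + t * k, snd u0 + t * j) \<in> P"
    unfolding secant_line_points_def by blast
  have "2 \<le> t * k" using k t by (smt (verit) mult_le_cancel_right1)
  then have unique: "u = u0" if "u \<in> P" "(fst u + t * k, snd u + t * j) \<in> P" for u
    by (rule mod_parabola_chord_unique[OF p _ t(2)]) (use that u0 P in auto)
  show ?thesis
  proof (rule card_lattice_line_strip_le[where u = u0 and j = j])
    fix z assume "z \<in> secant_line_points P Q k j t"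
    then obtain u where "z \<in> Q" "u \<in> P" "(fst u + t * k, snd u + t * j) \<in> P"
      "\<exists>r. z = (fst u + r * k, snd u + r * j)"
      unfolding secant_line_points_def by blast
    then show "(\<exists>r. z = (fst u0 + r * k, snd u0 + r * j)) \<and> X \<le> fst z \<and> fst z \<le> X + int s"
      using unique Q by blast
  qed (use k in simp)
qed (use k in simp)

lemma sum_card_secant_line_points_le:
  fixes s :: nat
  assumes p: "prime p" and P: "P \<subseteq> mod_parabola p X0 Y0 a b"
    and Q: "\<And>z. z \<in> Q \<Longrightarrow> X \<le> fst z \<and> fst z \<le> X + int s" and k: "2 \<le> k"
  shows "(\<Sum>t\<in>{1..(int p - 1) div k}. real (card (secant_line_points P Q k j t)))
    \<le> real p / real_of_int k * (real s / real_of_int k + 1)"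
proof -
  have "t * k < int p" if "t \<in> {1..(int p - 1) div k}" for t
  proof -
    have "t * k \<le> (int p - 1) div k * k" using that k by (intro mult_right_mono) auto
    also have "\<dots> \<le> int p - 1"
      using div_mult_mod_eq[of "int p - 1" k] pos_mod_sign[of k "int p - 1"] k by linarith
    finally show ?thesis by simp
  qed
  then have "(\<Sum>t\<in>{1..(int p - 1) div k}. real (card (secant_line_points P Q k j t)))
      \<le> (\<Sum>t\<in>{1..(int p - 1) div k}. real s / real_of_int k + 1)"
    using card_secant_line_points_le[OF p P Q k] by (intro sum_mono) auto
  also have "\<dots> = real_of_int ((int p - 1) div k) * (real s / real_of_int k + 1)"
    using k prime_gt_0_nat[OF p] by (simp add: pos_imp_zdiv_nonneg_iff)
  also have "\<dots> \<le> real p / real_of_int k * (real s / real_of_int k + 1)"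
  proof (rule mult_right_mono)
    have "real_of_int ((int p - 1) div k) \<le> real_of_int (int p - 1) / real_of_int k"
      by (metis floor_divide_of_int_eq of_int_floor_le)
    also have "\<dots> \<le> real p / real_of_int k" using k by (simp add: divide_right_mono)
    finally show "real_of_int ((int p - 1) div k) \<le> real p / real_of_int k" .
  qed (use k in simp)
  finally show ?thesis .
qed

text \<open>A secant through a point of Q has a primitive direction (k, j) in the slope window and
  passes through a chord u, u + t (k, j) with t k < p.  For fixed (k, j, t) that chord is unique,
  and its line meets the strip in at most s / k + 1 points.\<close>
lemma card_secant_points_le:
  fixes s :: nat
  assumes p: "prime p" and P: "P \<subseteq> mod_parabola p X0 Y0 a b" and "finite Q"
    and Q: "\<And>z. z \<in> Q \<Longrightarrow> X \<le> fst z \<and> fst z \<le> X + int s"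
    and slopes: "\<And>u z. u \<in> P \<Longrightarrow> z \<in> Q \<Longrightarrow> fst u < fst z \<and> lo \<le> slope u z \<and> slope u z \<le> hi"
    and lo: "0 < lo" and hi: "hi < 1"
  shows "real (card (secant_points P Q))
    \<le> (\<Sum>(k, j)\<in>slope_dirs p lo hi. real p / real_of_int k * (real s / real_of_int k + 1))"
proof -
  define T where "T k = {1..(int p - 1) div k}" for k :: int
  define L where "L = secant_line_points P Q"
  have fin_dirs: "finite (slope_dirs p lo hi)" by (rule finite_slope_dirs[OF lo hi])
  have fin_L: "finite (L k j t)" for k j t
    using \<open>finite Q\<close> unfolding L_def secant_line_points_def by simp
  have "secant_points P Q \<subseteq> (\<Union>(k, j)\<in>slope_dirs p lo hi. \<Union>t\<in>T k. L k j t)"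
    using secant_points_subset_lines[OF P slopes] unfolding T_def L_def .
  then have "card (secant_points P Q) \<le> card (\<Union>(k, j)\<in>slope_dirs p lo hi. \<Union>t\<in>T k. L k j t)"
    by (rule card_mono[rotated]) (auto intro!: finite_UN_I fin_dirs fin_L simp: T_def)
  also have "\<dots> \<le> (\<Sum>(k, j)\<in>slope_dirs p lo hi. card (\<Union>t\<in>T k. L k j t))"
    using card_UN_le[OF fin_dirs, of "\<lambda>(k, j). \<Union>t\<in>T k. L k j t"] by (simp add: case_prod_beta)
  also have "\<dots> \<le> (\<Sum>(k, j)\<in>slope_dirs p lo hi. \<Sum>t\<in>T k. card (L k j t))"
    by (intro sum_mono) (auto intro: card_UN_le simp: T_def)
  finally have "real (card (secant_points P Q))
      \<le> (\<Sum>(k, j)\<in>slope_dirs p lo hi. \<Sum>t\<in>T k. real (card (L k j t)))"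
    by (simp add: case_prod_beta flip: of_nat_sum of_nat_le_iff)
  also have "\<dots> \<le> (\<Sum>(k, j)\<in>slope_dirs p lo hi. real p / real_of_int k * (real s / real_of_int k + 1))"
    using sum_card_secant_line_points_le[OF p P Q] slope_dirsD(1)[OF _ lo hi]
    unfolding T_def L_def by (intro sum_mono) auto
  finally show ?thesis .
qed

section \<open>Primitive directions in a slope window\<close>

lemma reduced_fractions_far_apart:
  fixes k j k' j' :: int
  assumes "coprime k j" "coprime k' j'" "0 < k" "0 < k'" "(k, j) \<noteq> (k', j')"
  shows "1 / (real_of_int k * real_of_int k') \<le> \<bar>real_of_int j / real_of_int k - real_of_int j' / real_of_int k'\<bar>"
proof -
  have "j * k' \<noteq> j' * k"
  proof
    assume eq: "j * k' = j' * k"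
    have "k dvd j * k'" using eq by simp
    then have "k dvd k'" using assms(1) by (metis coprime_dvd_mult_right_iff)
    moreover have "k' dvd j' * k" using eq by (metis dvd_triv_right)
    then have "k' dvd k" using assms(2) by (metis coprime_dvd_mult_right_iff)
    ultimately have "k = k'" using assms(3,4) by (simp add: zdvd_antisym_nonneg)
    then show False using assms(3,5) eq by simp
  qed
  then have N: "1 \<le> \<bar>real_of_int (j * k' - j' * k)\<bar>" by linarith
  have kk: "0 < real_of_int k * real_of_int k'" using assms(3,4) by simp
  have "1 / (real_of_int k * real_of_int k')
      \<le> \<bar>real_of_int (j * k' - j' * k)\<bar> / (real_of_int k * real_of_int k')"
    using N kk by (simp add: divide_right_mono)
  also have "\<dots> = \<bar>real_of_int (j * k' - j' * k) / (real_of_int k * real_of_int k')\<bar>"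
    by (rule abs_div_pos[OF kk])
  also have "real_of_int (j * k' - j' * k) / (real_of_int k * real_of_int k')
      = real_of_int j / real_of_int k - real_of_int j' / real_of_int k'"
    using assms(3,4) by (simp add: field_simps)
  finally show ?thesis .
qed

text \<open>Distinct fractions j/k, j'/k' with k, k' < K are at least 1/(k k') > 1/K^2 apart,
  so the integer parts of (j/k - lo) K^2 are pairwise distinct.\<close>
lemma card_slope_dirs_below_le:
  assumes lo: "0 < lo" and hi: "hi < 1" and "lo \<le> hi" and "0 < K"
  shows "real (card {w \<in> slope_dirs p lo hi. real_of_int (fst w) < K}) \<le> (hi - lo) * K^2 + 1"
proof -
  define W where "W = {w \<in> slope_dirs p lo hi. real_of_int (fst w) < K}"
  define \<psi> where "\<psi> w = \<lfloor>(real_of_int (snd w) / real_of_int (fst w) - lo) * K^2\<rfloor>" for w :: "int \<times> int"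
  have "inj_on \<psi> W"
  proof
    fix w w' assume w: "w \<in> W" and w': "w' \<in> W" and eq: "\<psi> w = \<psi> w'"
    obtain k j k' j' where kj: "w = (k, j)" "w' = (k', j')" by (cases w, cases w')
    have "(k, j) \<in> slope_dirs p lo hi" "(k', j') \<in> slope_dirs p lo hi"
      and K: "real_of_int k < K" "real_of_int k' < K" using w w' kj W_def by auto
    note D = slope_dirsD[OF this(1) lo hi] slope_dirsD[OF this(2) lo hi]
    define d where "d = \<bar>real_of_int j / real_of_int k - real_of_int j' / real_of_int k'\<bar>"
    have "\<lfloor>(real_of_int j / real_of_int k - lo) * K^2\<rfloor> = \<lfloor>(real_of_int j' / real_of_int k' - lo) * K^2\<rfloor>"
      using eq unfolding \<psi>_def kj by simp
    then have "\<bar>(real_of_int j / real_of_int k - lo) * K^2 - (real_of_int j' / real_of_int k' - lo) * K^2\<bar> < 1"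
      by linarith
    then have close: "d * K^2 < 1" unfolding d_def by (simp add: abs_mult flip: left_diff_distrib)
    have kk: "0 < real_of_int k * real_of_int k'" "real_of_int k * real_of_int k' < K^2"
      using D K by (simp_all add: power2_eq_square mult_strict_mono)
    show "w = w'"
    proof (rule ccontr)
      assume "w \<noteq> w'"
      then have "1 / (real_of_int k * real_of_int k') \<le> d"
        using reduced_fractions_far_apart[of k j k' j'] D kj unfolding d_def by auto
      then have "1 / (real_of_int k * real_of_int k') * K^2 \<le> d * K^2"
        by (rule mult_right_mono) simp
      then have "K^2 / (real_of_int k * real_of_int k') < 1" using close by simp
      then show False using kk by (simp add: divide_less_eq)
    qed
  qed
  moreover have "\<psi> ` W \<subseteq> {0..\<lfloor>(hi - lo) * K^2\<rfloor>}"
  proof (rule image_subsetI)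
    fix w assume "w \<in> W"
    then obtain k j where kj: "w = (k, j)" "(k, j) \<in> slope_dirs p lo hi"
      unfolding W_def by (cases w) auto
    then have "(real_of_int j / real_of_int k - lo) * K^2 \<le> (hi - lo) * K^2"
      using slope_dirsD[OF kj(2) lo hi] by (intro mult_right_mono) auto
    then show "\<psi> w \<in> {0..\<lfloor>(hi - lo) * K^2\<rfloor>}"
      unfolding \<psi>_def kj using slope_dirsD[OF kj(2) lo hi] by (simp add: floor_mono)
  qed
  ultimately have "card W \<le> card {0..\<lfloor>(hi - lo) * K^2\<rfloor>}"
    by (metis card_image card_mono finite_atLeastAtMost_int)
  moreover have "0 \<le> \<lfloor>(hi - lo) * K^2\<rfloor>" using \<open>lo \<le> hi\<close> by simp
  ultimately have "int (card W) \<le> \<lfloor>(hi - lo) * K^2\<rfloor> + 1" by (simp add: le_nat_iff)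
  then have "real (card W) \<le> real_of_int \<lfloor>(hi - lo) * K^2\<rfloor> + 1"
    by (metis of_int_le_iff of_int_of_nat_eq of_int_add of_int_1)
  then show ?thesis unfolding W_def by linarith
qed

lemma card_slope_dirs_column_le:
  assumes "0 < k" "lo \<le> hi"
  shows "finite {j. (k, j) \<in> slope_dirs p lo hi}"
    "real (card {j. (k, j) \<in> slope_dirs p lo hi}) \<le> real_of_int k * (hi - lo) + 1"
proof -
  let ?J = "{j. (k, j) \<in> slope_dirs p lo hi}"
  have k: "0 < real_of_int k" using assms(1) by simp
  have sub: "?J \<subseteq> {\<lceil>real_of_int k * lo\<rceil>..\<lfloor>real_of_int k * hi\<rfloor>}"
  proof
    fix j assume "j \<in> ?J"
    then have "lo \<le> real_of_int j / real_of_int k" "real_of_int j / real_of_int k \<le> hi"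
      unfolding slope_dirs_def by auto
    then show "j \<in> {\<lceil>real_of_int k * lo\<rceil>..\<lfloor>real_of_int k * hi\<rfloor>}"
      using k by (auto simp: field_simps ceiling_le_iff le_floor_iff)
  qed
  then show "finite ?J" by (rule finite_subset) simp
  have "card ?J \<le> nat (\<lfloor>real_of_int k * hi\<rfloor> + 1 - \<lceil>real_of_int k * lo\<rceil>)"
    using card_mono[OF _ sub] by simp
  moreover have "real_of_int k * lo \<le> real_of_int k * hi" using k assms(2) by simp
  ultimately show "real (card ?J) \<le> real_of_int k * (hi - lo) + 1"
    using floor_le_ceiling[of "real_of_int k * hi"] ceiling_correct[of "real_of_int k * lo"]
      floor_correct[of "real_of_int k * hi"] by (simp add: algebra_simps) linarith
qed

lemma sum_inverse_squares_le:
  assumes "2 \<le> N"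
  shows "(\<Sum>n\<in>{N..M}. 1 / (real n)^2) \<le> 1 / (real N - 1)"
proof (cases "N \<le> Suc M")
  case True
  define g where "g n = - 1 / (real n - 1)" for n :: nat
  have "(\<Sum>n\<in>{N..M}. 1 / (real n)^2) \<le> (\<Sum>n\<in>{N..M}. g (Suc n) - g n)"
  proof (rule sum_mono)
    fix n assume "n \<in> {N..M}"
    then have n: "2 \<le> real n" using assms by simp
    then have "g (Suc n) - g n = 1 / (real n * (real n - 1))" by (simp add: g_def field_simps)
    also have "1 / (real n)^2 \<le> \<dots>" using n by (intro divide_left_mono) (auto simp: power2_eq_square)
    finally show "1 / (real n)^2 \<le> g (Suc n) - g n" .
  qed
  also have "\<dots> = g (Suc M) - g N" by (rule sum_Suc_diff[OF True])
  also have "\<dots> \<le> 1 / (real N - 1)" by (simp add: g_def)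
  finally show ?thesis .
qed (use assms in simp)

lemma harm_le_ln_add_one: "0 < n \<Longrightarrow> (harm n :: real) \<le> ln (real n) + 1"
  using euler_mascheroni_sequence_decreasing[of 1 n] by (simp add: harm_def)

lemma sum_column_weights_le:
  fixes p s N :: nat
  assumes K: "2 \<le> K" "K \<le> real N" and \<delta>: "0 \<le> \<delta>" and p: "0 < p"
  shows "(\<Sum>n\<in>{N..p}. (real n * \<delta> + 1) * (real p / real n * (real s / real n + 1)))
    \<le> real p * (real s * \<delta> * (ln (real p) + 1) + real p * \<delta> + 2 * real s / K + (ln (real p) + 1))"
proof -
  have N: "2 \<le> N" using K by simp
  have harm: "(\<Sum>n\<in>{N..p}. 1 / real n) \<le> ln (real p) + 1"
  proof -
    have "(\<Sum>n\<in>{N..p}. 1 / real n) \<le> (\<Sum>n\<in>{1..p}. 1 / real n)"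
      using N by (intro sum_mono2) auto
    also have "\<dots> = harm p" by (simp add: harm_def divide_inverse)
    finally show ?thesis using harm_le_ln_add_one[OF p] by simp
  qed
  have squares: "(\<Sum>n\<in>{N..p}. 1 / (real n)^2) \<le> 2 / K"
  proof -
    have "1 / (real N - 1) \<le> 2 / K" using K by (simp add: field_simps)
    then show ?thesis using sum_inverse_squares_le[OF N, of p] by linarith
  qed
  have "(\<Sum>n\<in>{N..p}. (real n * \<delta> + 1) * (real p / real n * (real s / real n + 1)))
      = real p * real s * \<delta> * (\<Sum>n\<in>{N..p}. 1 / real n) + real (card {N..p}) * (real p * \<delta>)
        + real p * real s * (\<Sum>n\<in>{N..p}. 1 / (real n)^2) + real p * (\<Sum>n\<in>{N..p}. 1 / real n)"
  proof -
    have "(real n * \<delta> + 1) * (real p / real n * (real s / real n + 1))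
        = real p * real s * \<delta> * (1 / real n) + real p * \<delta>
          + real p * real s * (1 / (real n)^2) + real p * (1 / real n)" if "n \<in> {N..p}" for n
      using that N by (simp add: field_simps power2_eq_square)
    then show ?thesis by (simp add: sum.distrib sum_distrib_left)
  qed
  also have "\<dots> \<le> real p * real s * \<delta> * (ln (real p) + 1) + real p * (real p * \<delta>)
      + real p * real s * (2 / K) + real p * (ln (real p) + 1)"
  proof -
    have "real (card {N..p}) * (real p * \<delta>) \<le> real p * (real p * \<delta>)"
      using N \<delta> by (intro mult_right_mono) auto
    then show ?thesis
      using mult_left_mono[OF harm, of "real p * real s * \<delta>"] mult_left_mono[OF squares, of "real p * real s"]
        mult_left_mono[OF harm, of "real p"] \<delta> by simp
  qed
  finally show ?thesis by (simp add: algebra_simps)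
qed

lemma sum_slope_dirs_below_le:
  assumes lo: "0 < lo" and hi: "hi < 1" and "lo \<le> hi" and "0 < K"
  shows "(\<Sum>(k, j)\<in>{w \<in> slope_dirs p lo hi. real_of_int (fst w) < K}.
            real p / real_of_int k * (real s / real_of_int k + 1))
    \<le> ((hi - lo) * K^2 + 1) * (real p * (hi * (real s * hi + 1)))"
proof -
  let ?W = "{w \<in> slope_dirs p lo hi. real_of_int (fst w) < K}"
  have "real p / real_of_int k * (real s / real_of_int k + 1) \<le> real p * (hi * (real s * hi + 1))"
    if "(k, j) \<in> ?W" for k j
  proof -
    note D = slope_dirsD[of k j p lo hi] that lo hi
    have k: "0 < real_of_int k" using D by simp
    have "1 / real_of_int k \<le> real_of_int j / real_of_int k" using D k by (simp add: divide_right_mono)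
    then have ik: "1 / real_of_int k \<le> hi" using D by auto
    have "real s * (1 / real_of_int k) + 1 \<le> real s * hi + 1" using mult_left_mono[OF ik, of "real s"] by simp
    moreover have "0 \<le> hi" using ik k by (smt (verit) divide_pos_pos)
    ultimately have "1 / real_of_int k * (real s * (1 / real_of_int k) + 1) \<le> hi * (real s * hi + 1)"
      using ik k by (intro mult_mono) auto
    then have "real p * (1 / real_of_int k * (real s * (1 / real_of_int k) + 1))
        \<le> real p * (hi * (real s * hi + 1))" by (rule mult_left_mono) simp
    moreover have "real p / real_of_int k * (real s / real_of_int k + 1)
        = real p * (1 / real_of_int k * (real s * (1 / real_of_int k) + 1))" by simp
    ultimately show ?thesis by simp
  qed
  then have "(\<Sum>(k, j)\<in>?W. real p / real_of_int k * (real s / real_of_int k + 1))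
      \<le> real (card ?W) * (real p * (hi * (real s * hi + 1)))"
    by (intro sum_bounded_above) auto
  also have "\<dots> \<le> ((hi - lo) * K^2 + 1) * (real p * (hi * (real s * hi + 1)))"
    using card_slope_dirs_below_le[OF assms] assms by (intro mult_right_mono) auto
  finally show ?thesis .
qed

lemma sum_slope_dirs_above_le:
  assumes lo: "0 < lo" and hi: "hi < 1" and "lo \<le> hi" and K: "2 \<le> K" and p: "0 < p"
  shows "(\<Sum>(k, j)\<in>{w \<in> slope_dirs p lo hi. \<not> real_of_int (fst w) < K}.
            real p / real_of_int k * (real s / real_of_int k + 1))
    \<le> real p * (real s * (hi - lo) * (ln (real p) + 1) + real p * (hi - lo) + 2 * real s / K
         + (ln (real p) + 1))"
proof -
  define f where "f k = real p / real_of_int k * (real s / real_of_int k + 1)" for k :: int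
  define J where "J k = {j. (k, j) \<in> slope_dirs p lo hi}" for k
  define N where "N = nat \<lceil>K\<rceil>"
  have "2 \<le> \<lceil>K\<rceil>" using K le_of_int_ceiling[of K] by linarith
  then have N: "K \<le> real N" "int N = \<lceil>K\<rceil>" "2 \<le> N" by (auto simp: N_def le_nat_iff)
  define ks where "ks = {int N..int p}"
  have ks: "0 < k" if "k \<in> ks" for k using that N by (simp add: ks_def)
  have f: "0 \<le> f k" if "k \<in> ks" for k using ks[OF that] by (simp add: f_def)
  have J: "finite (J k)" "real (card (J k)) \<le> real_of_int k * (hi - lo) + 1" if "k \<in> ks" for k
    using card_slope_dirs_column_le[OF ks[OF that] \<open>lo \<le> hi\<close>] by (simp_all add: J_def)
  have "{w \<in> slope_dirs p lo hi. \<not> real_of_int (fst w) < K} \<subseteq> Sigma ks J"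
  proof (rule subrelI)
    fix k j assume "(k, j) \<in> {w \<in> slope_dirs p lo hi. \<not> real_of_int (fst w) < K}"
    then show "(k, j) \<in> Sigma ks J"
      using slope_dirsD[of k j p lo hi] lo hi N by (auto simp: ks_def J_def ceiling_le_iff)
  qed
  then have "(\<Sum>(k, j)\<in>{w \<in> slope_dirs p lo hi. \<not> real_of_int (fst w) < K}. f k) \<le> (\<Sum>(k, j)\<in>Sigma ks J. f k)"
    using J f by (intro sum_mono2) (auto simp: ks_def)
  also have "\<dots> = (\<Sum>k\<in>ks. real (card (J k)) * f k)"
    using J by (simp add: sum.Sigma[symmetric] ks_def)
  also have "\<dots> \<le> (\<Sum>k\<in>ks. (real_of_int k * (hi - lo) + 1) * f k)"
    using J f by (intro sum_mono mult_right_mono) auto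
  also have "\<dots> = (\<Sum>n\<in>{N..p}. (real n * (hi - lo) + 1) * (real p / real n * (real s / real n + 1)))"
    by (simp add: ks_def image_int_atLeastAtMost[symmetric] sum.reindex f_def)
  also have "\<dots> \<le> real p * (real s * (hi - lo) * (ln (real p) + 1) + real p * (hi - lo) + 2 * real s / K
         + (ln (real p) + 1))"
    using N \<open>lo \<le> hi\<close> by (intro sum_column_weights_le K p) auto
  finally show ?thesis unfolding f_def .
qed

definition direction_sum_bound :: "real \<Rightarrow> real \<Rightarrow> real \<Rightarrow> real \<Rightarrow> real \<Rightarrow> real \<Rightarrow> real" where
  "direction_sum_bound p s \<delta> h K L = (\<delta> * K^2 + 1) * (h * (s * h + 1)) + s * \<delta> * L + p * \<delta> + 2 * s / K + L"

lemma direction_sum_bound_mono: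
  assumes "0 \<le> p" "p \<le> p'" "0 \<le> s" "s \<le> s'" "0 \<le> \<delta>" "\<delta> \<le> \<delta>'" "0 \<le> h" "h \<le> h'"
    "0 \<le> L" "L \<le> L'" "0 < K"
  shows "direction_sum_bound p s \<delta> h K L \<le> direction_sum_bound p' s' \<delta>' h' K L'"
proof -
  have "s * h \<le> s' * h'" using assms by (intro mult_mono) auto
  then have hs: "h * (s * h + 1) \<le> h' * (s' * h' + 1)" using assms by (intro mult_mono) auto
  have "\<delta> * K^2 + 1 \<le> \<delta>' * K^2 + 1" using assms by (simp add: mult_right_mono)
  then have "(\<delta> * K^2 + 1) * (h * (s * h + 1)) \<le> (\<delta>' * K^2 + 1) * (h' * (s' * h' + 1))"
    by (rule mult_mono[OF _ hs]) (use assms in auto)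
  moreover have "s * \<delta> * L \<le> s' * \<delta>' * L'" "p * \<delta> \<le> p' * \<delta>'" using assms by (auto intro!: mult_mono)
  moreover have "2 * s / K \<le> 2 * s' / K" using assms by (intro divide_right_mono) auto
  ultimately show ?thesis unfolding direction_sum_bound_def using assms by linarith
qed

lemma sum_slope_dirs_le:
  assumes "0 < lo" "hi < 1" "lo \<le> hi" "2 \<le> K" "0 < p"
  shows "(\<Sum>(k, j)\<in>slope_dirs p lo hi. real p / real_of_int k * (real s / real_of_int k + 1))
    \<le> real p * direction_sum_bound p s (hi - lo) hi K (ln p + 1)"
proof -
  let ?f = "\<lambda>(k, j). real p / real_of_int k * (real s / real_of_int k + 1)"
  let ?W = "slope_dirs p lo hi"
  have "sum ?f ?W = sum ?f {w \<in> ?W. real_of_int (fst w) < K} + sum ?f {w \<in> ?W. \<not> real_of_int (fst w) < K}"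
  proof -
    let ?B = "{w. real_of_int (fst w) < K}"
    have "?W \<inter> ?B = {w \<in> ?W. real_of_int (fst w) < K}" "?W - ?B = {w \<in> ?W. \<not> real_of_int (fst w) < K}"
      by auto
    with sum.Int_Diff[OF finite_slope_dirs[OF assms(1,2)], where g = ?f and B = ?B] show ?thesis by simp
  qed
  also have "\<dots> \<le> real p * direction_sum_bound p s (hi - lo) hi K (ln p + 1)"
    using sum_slope_dirs_below_le[of lo hi K p s] sum_slope_dirs_above_le[of lo hi K p s] assms
    unfolding direction_sum_bound_def by (simp add: algebra_simps)
  finally show ?thesis .
qed

section \<open>The squares of the construction\<close>

text \<open>The side s_n is about growth (1 + eps) n / c and the height Y_n about growth eps n.
  Taking x real lets real_asymp handle the values at n - 1 as growth a (real n - 1).\<close>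
definition growth :: "real \<Rightarrow> real \<Rightarrow> real" where
  "growth a x = 2 powr x / x powr a"

lemma growth_of_nat: "growth a (real n) = 2 ^ n / real n powr a"
  by (simp add: growth_def powr_realpow)

lemma growth_pos: "0 < x \<Longrightarrow> 0 < growth a x"
  by (simp add: growth_def)

lemma growth_step:
  assumes x: "0 < x" and q: "q * ((x + 1) / x) powr a \<le> 2"
  shows "q * growth a x \<le> growth a (x + 1)"
proof -
  have "q * (x + 1) powr a \<le> 2 * x powr a"
    using q x by (simp add: powr_divide field_simps)
  then have "q * (x + 1) powr a * 2 powr x \<le> 2 * x powr a * 2 powr x"
    by (rule mult_right_mono) simp
  then show ?thesis
    using x by (simp add: growth_def powr_add field_simps)
qed

lemma succ_ratio_powr_le:
  fixes x x0 a b :: real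
  assumes "0 < x0" "x0 \<le> x" "0 \<le> a" "a \<le> b"
  shows "((x + 1) / x) powr a \<le> ((x0 + 1) / x0) powr b"
proof -
  have r: "1 \<le> (x + 1) / x" "(x + 1) / x \<le> (x0 + 1) / x0"
    using assms by (simp_all add: field_simps)
  then have "((x + 1) / x) powr a \<le> ((x + 1) / x) powr b"
    using assms by (intro powr_mono) auto
  also have "\<dots> \<le> ((x0 + 1) / x0) powr b"
    using r assms by (intro powr_mono2) auto
  finally show ?thesis .
qed

lemma growth_mono_nat:
  assumes "0 \<le> a" "a \<le> b" "0 < k0" "((real k0 + 1) / real k0) powr b \<le> 2" "k0 \<le> m" "m \<le> n"
  shows "growth a (real m) \<le> growth a (real n)"
proof (rule lift_Suc_mono_le_ivl[where f = "\<lambda>k. growth a (real k)" and N = "{k0..}"])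
  fix k assume "k \<in> {k0..}"
  then have "1 * ((real k + 1) / real k) powr a \<le> 2"
    using succ_ratio_powr_le[of "real k0" "real k" a b] assms by simp
  then show "growth a (real k) \<le> growth a (real (Suc k))"
    using growth_step[of "real k" 1 a] assms \<open>k \<in> {k0..}\<close> by (simp add: add.commute)
qed (use assms in auto)

lemma side_le_growth: "0 < c \<Longrightarrow> real (side eps c n) \<le> growth (1 + eps) (real n) / c"
  unfolding side_def growth_of_nat by (simp add: divide_divide_eq_left mult.commute)

lemma Ytop_bounds:
  "0 \<le> Ytop eps n" "real_of_int (Ytop eps n) \<le> growth eps (real n)"
  "growth eps (real n) - 1 < real_of_int (Ytop eps n)"
proof -
  show "0 \<le> Ytop eps n" by (simp add: Ytop_def)
  show "real_of_int (Ytop eps n) \<le> growth eps (real n)" by (simp add: Ytop_def growth_of_nat)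
  show "growth eps (real n) - 1 < real_of_int (Ytop eps n)"
    unfolding Ytop_def growth_of_nat by linarith
qed

lemma side_le_growth_pred:
  assumes eps: "0 < eps" "eps < 1" and c: "1 \<le> c" and m: "1 \<le> m" "m < n"
    and n: "2 \<le> growth (1 + eps) (real n - 1)"
  shows "real (side eps c m) \<le> growth (1 + eps) (real n - 1) / c"
proof -
  have "growth (1 + eps) (real m) \<le> growth (1 + eps) (real n - 1)"
  proof (cases "3 \<le> m")
    case True
    have "((real 3 + 1) / real 3) powr 2 \<le> (2::real)" by (simp add: powr_numeral power2_eq_square)
    then show ?thesis
      using growth_mono_nat[of "1 + eps" 2 3 m "n - 1"] True m eps by (simp add: of_nat_diff)
  next
    case False
    then have "m = 1 \<or> m = 2" using m by auto
    moreover have "(2::real) \<le> 2 powr (1 + eps)"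
      using powr_mono[of 1 "1 + eps" 2] eps by simp
    ultimately have "growth (1 + eps) (real m) \<le> 2"
      by (auto simp: growth_of_nat field_simps)
    then show ?thesis using n by simp
  qed
  then show ?thesis
    using side_le_growth[of c eps m] c by (smt (verit) divide_right_mono)
qed

lemma Ytop_le_growth_pred:
  assumes eps: "0 < eps" "eps < 1" and m: "1 \<le> m" "m < n"
  shows "real_of_int (Ytop eps m) \<le> growth eps (real n - 1)"
proof -
  have "growth eps (real m) \<le> growth eps (real (n - 1))"
    using growth_mono_nat[of eps 1 1 m "n - 1"] m eps by simp
  then show ?thesis using Ytop_bounds(2)[of eps m] m by (simp add: of_nat_diff)
qed

lemma side_less_two_pow:
  assumes c: "1 < c" and "0 < eps"
  shows "int (side eps c n) < 2 ^ n"
proof (cases "n = 0")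
  case False
  then have "1 \<le> real n powr (1 + eps)" using assms by (simp add: ge_one_powr_ge_zero)
  then have "growth (1 + eps) (real n) \<le> 2 ^ n" by (simp add: growth_of_nat divide_le_eq)
  then have "real (side eps c n) \<le> 2 ^ n / c"
    using side_le_growth[of c eps n] c by (smt (verit) divide_right_mono)
  also have "\<dots> < 2 ^ n" using c by (simp add: divide_less_eq)
  finally have "side eps c n < 2 ^ n" by (metis of_nat_less_iff of_nat_numeral of_nat_power)
  then show ?thesis by (metis of_nat_less_iff of_nat_numeral of_nat_power)
qed (simp add: side_def)

lemma prime_pr:
  assumes "3 \<le> side eps c n"
  shows "prime (pr eps c n)" "pr eps c n < side eps c n"
proof -
  let ?P = "\<lambda>q. prime q \<and> q < side eps c n"
  have "?P 2" using assms by simp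
  then have "?P (Greatest ?P)" by (rule GreatestI_nat[of _ 2 "side eps c n"]) simp
  then show "prime (pr eps c n)" "pr eps c n < side eps c n" unfolding pr_def by auto
qed

definition square :: "int \<Rightarrow> int \<Rightarrow> nat \<Rightarrow> pt set" where
  "square x0 y0 s = {(x, y). x0 \<le> x \<and> x \<le> x0 + int s \<and> y0 - int s \<le> y \<and> y \<le> y0}"

lemma Qsq_eq_square: "Qsq eps c n = square (2 ^ n) (Ytop eps n) (side eps c n)"
  unfolding Qsq_def square_def ..

lemma finite_square: "finite (square x0 y0 s)"
proof (rule finite_subset)
  show "square x0 y0 s \<subseteq> {x0..x0 + int s} \<times> {y0 - int s..y0}" unfolding square_def by auto
qed simp

lemma Qsq_disjoint:
  assumes "1 < c" "0 < eps" "z \<in> Qsq eps c m" "z \<in> Qsq eps c k"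
  shows "m = k"
proof -
  have bracket: "2 ^ i \<le> fst z \<and> fst z < 2 ^ Suc i" if "z \<in> Qsq eps c i" for i
  proof -
    have "2 ^ i \<le> fst z" "fst z \<le> 2 ^ i + int (side eps c i)" using that by (auto simp: Qsq_def)
    moreover have "int (side eps c i) < 2 ^ i" by (rule side_less_two_pow[OF assms(1,2)])
    ultimately have "2 ^ i \<le> fst z \<and> fst z < 2 * 2 ^ i" by linarith
    then show ?thesis by simp
  qed
  show "m = k"
  proof (rule ccontr)
    assume "m \<noteq> k"
    then have "Suc m \<le> k \<or> Suc k \<le> m" by auto
    then show False
      using bracket[OF assms(3)] bracket[OF assms(4)]
        power_increasing[of "Suc m" k "2::int"] power_increasing[of "Suc k" m "2::int"] by auto
  qed
qed

lemma slope_between_squares: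
  assumes u: "u \<in> square x0 y0 s" and z: "z \<in> square x1 y1 t"
    and D: "int s < x1 - x0" and A: "int t < y1 - y0"
  shows "fst u < fst z \<and>
    real_of_int (y1 - y0 - int t) / real_of_int (x1 - x0 + int t) \<le> slope u z \<and>
    slope u z \<le> real_of_int (y1 - y0 + int s) / real_of_int (x1 - x0 - int s)"
proof -
  have X: "x1 - x0 - int s \<le> fst z - fst u" "fst z - fst u \<le> x1 - x0 + int t"
    and Y: "y1 - y0 - int t \<le> snd z - snd u" "snd z - snd u \<le> y1 - y0 + int s"
    using u z unfolding square_def by auto
  have "real_of_int (y1 - y0 - int t) / real_of_int (x1 - x0 + int t)
      \<le> real_of_int (snd z - snd u) / real_of_int (fst z - fst u)"
    using X Y A D by (intro frac_le) simp_all
  moreover have "real_of_int (snd z - snd u) / real_of_int (fst z - fst u)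
      \<le> real_of_int (y1 - y0 + int s) / real_of_int (x1 - x0 - int s)"
    using X Y A D by (intro frac_le) simp_all
  ultimately show ?thesis using X D unfolding slope_def by simp
qed

lemma slope_window_width_le:
  fixes A D s t a d \<sigma> g :: real
  assumes "0 \<le> A" "A \<le> a" "0 < d" "d \<le> D" "0 \<le> s" "0 \<le> t" "0 < g" "g \<le> D - s" "s + t \<le> \<sigma>"
  shows "(A + s) / (D - s) - (A - t) / (D + t) \<le> \<sigma> * (a / d + 1) / g"
proof -
  have D: "0 < D" "0 < D - s" using assms by linarith+
  have "(A + s) / (D - s) - (A - t) / (D + t) = (s + t) * ((A + D) / (D + t)) / (D - s)"
    using assms D by (simp add: field_simps)
  also have "\<dots> \<le> \<sigma> * (a / d + 1) / g"
  proof (intro frac_le mult_mono)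
    have "(A + D) / (D + t) \<le> (A + D) / D" using assms D by (intro divide_left_mono) auto
    also have "\<dots> = A / D + 1" using D by (simp add: field_simps)
    also have "A / D \<le> a / d" using assms by (intro frac_le) auto
    finally show "(A + D) / (D + t) \<le> a / d + 1" by simp
    have "0 \<le> a / d" using assms by simp
    then show "0 \<le> \<sigma> * (a / d + 1)" using assms by (intro mult_nonneg_nonneg) linarith+
  qed (use assms D in auto)
  finally show ?thesis .
qed

text \<open>Bounds, uniform in m < n, for the largest slope and for the width of the slope window
  between Q_m and Q_n.\<close>
definition slope_bound :: "real \<Rightarrow> nat \<Rightarrow> real" where
  "slope_bound eps n = (growth eps (real n) + growth (1 + eps) (real n - 1))
     / (2 ^ n / 2 - growth (1 + eps) (real n - 1))"

definition slope_width_bound :: "real \<Rightarrow> real \<Rightarrow> nat \<Rightarrow> real" where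
  "slope_width_bound c eps n = (growth (1 + eps) (real n - 1) + growth (1 + eps) (real n)) / c
     * (growth eps (real n) / (2 ^ n / 2) + 1) / (2 ^ n / 2 - growth (1 + eps) (real n - 1))"

lemma Qsq_offset_bounds:
  assumes eps: "0 < eps" "eps < 1" and mn: "1 \<le> m" "m < n"
  shows "2 ^ n / 2 \<le> real_of_int (2 ^ n - 2 ^ m :: int)"
    "real_of_int (Ytop eps n - Ytop eps m) \<le> growth eps (real n)"
    "growth eps (real n) - 1 - growth eps (real n - 1) < real_of_int (Ytop eps n - Ytop eps m)"
proof -
  have "(2::real) ^ m \<le> 2 ^ n / 2"
    using power_increasing[of "Suc m" n "2::real"] mn by simp
  then show "2 ^ n / 2 \<le> real_of_int (2 ^ n - 2 ^ m :: int)" by simp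
  show "real_of_int (Ytop eps n - Ytop eps m) \<le> growth eps (real n)"
    "growth eps (real n) - 1 - growth eps (real n - 1) < real_of_int (Ytop eps n - Ytop eps m)"
    using Ytop_bounds[of eps n] Ytop_bounds(1)[of eps m] Ytop_le_growth_pred[OF eps mn] by simp_all
qed

lemma slope_window_Qsq:
  assumes eps: "0 < eps" "eps < 1" and c: "1 \<le> c" and mn: "1 \<le> m" "m < n"
    and pred: "2 \<le> growth (1 + eps) (real n - 1)"
    and gap: "growth (1 + eps) (real n - 1) < 2 ^ n / 2"
    and height: "growth eps (real n - 1) + growth (1 + eps) (real n) + 1 < growth eps (real n)"
  obtains lo hi where "0 < lo" "lo \<le> hi" "hi \<le> slope_bound eps n" "hi - lo \<le> slope_width_bound c eps n"
    "\<And>u z. u \<in> Qsq eps c m \<Longrightarrow> z \<in> Qsq eps c n \<Longrightarrow> fst u < fst z \<and> lo \<le> slope u z \<and> slope u z \<le> hi"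
proof -
  define sm sn where "sm = side eps c m" and "sn = side eps c n"
  define A D where "A = Ytop eps n - Ytop eps m" and "D = (2::int) ^ n - 2 ^ m"
  define lo hi where "lo = real_of_int (A - int sn) / real_of_int (D + int sn)"
    and "hi = real_of_int (A + int sm) / real_of_int (D - int sm)"
  let ?G1 = "growth (1 + eps) (real n - 1)"
  have sm: "real sm \<le> ?G1 / c" "?G1 / c \<le> ?G1"
    using side_le_growth_pred[OF eps c mn pred] c pred by (simp_all add: sm_def divide_le_eq)
  have sn: "real sn \<le> growth (1 + eps) (real n) / c" "growth (1 + eps) (real n) / c \<le> growth (1 + eps) (real n)"
    using side_le_growth[of c eps n] c growth_pos[of "real n" "1 + eps"] mn
    by (simp_all add: sn_def divide_le_eq)
  note D = Qsq_offset_bounds(1)[OF eps mn, folded D_def]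
  note A = Qsq_offset_bounds(2,3)[OF eps mn, folded A_def]
  have Dsm: "2 ^ n / 2 - ?G1 \<le> real_of_int (D - int sm)" using D sm by simp
  have Asn: "0 < real_of_int (A - int sn)" using A sn height by simp
  have "int sm < D" "int sn < A" using Dsm Asn gap by simp_all
  then have window: "fst u < fst z \<and> lo \<le> slope u z \<and> slope u z \<le> hi"
    if "u \<in> Qsq eps c m" "z \<in> Qsq eps c n" for u z
    using slope_between_squares[of u "2 ^ m" "Ytop eps m" sm z "2 ^ n" "Ytop eps n" sn] that
    unfolding lo_def hi_def A_def D_def sm_def sn_def Qsq_eq_square by blast
  show thesis
  proof
    have "0 < real_of_int D" using D zero_less_power[of "2::real" n] by linarith
    then show "0 < lo" unfolding lo_def using Asn by (simp add: zero_less_divide_iff)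
    show "lo \<le> hi"
      using window[of "(2 ^ m, Ytop eps m)" "(2 ^ n, Ytop eps n)"] by (simp add: Qsq_def)
    have "real_of_int (A + int sm) \<le> growth eps (real n) + ?G1" using A sm by simp
    then show "hi \<le> slope_bound eps n"
      unfolding hi_def slope_bound_def using Dsm gap growth_pos[of "real n" eps] sm mn
      by (intro frac_le) auto
    show "hi - lo \<le> slope_width_bound c eps n"
      unfolding hi_def lo_def slope_width_bound_def
      using slope_window_width_le[of "real_of_int A" "growth eps (real n)" "2 ^ n / 2" "real_of_int D"
          "real sm" "real sn" "2 ^ n / 2 - ?G1" "(?G1 + growth (1 + eps) (real n)) / c"]
        A D Asn Dsm gap sm sn by (simp add: add_divide_distrib)
  qed (use window in blast)
qed

section \<open>Asymptotic estimates\<close>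

text \<open>The cutoff n^(eps + 1/3) between small and large denominators k makes both
  (\<delta> K^2 + 1) h (s h + 1) and 2 s / K in direction_sum_bound of lower order.\<close>
definition secant_factor :: "real \<Rightarrow> real \<Rightarrow> nat \<Rightarrow> real" where
  "secant_factor c eps n = direction_sum_bound
     (growth (1 + eps) (real n - 1) / c) (growth (1 + eps) (real n) / c)
     (slope_width_bound c eps n) (slope_bound eps n) (real n powr (eps + 1 / 3)) (real n + 1)"

lemma direction_sum_bound_nonneg:
  assumes "0 \<le> p" "0 \<le> s" "0 \<le> \<delta>" "0 \<le> h" "0 \<le> L" "0 < K"
  shows "0 \<le> direction_sum_bound p s \<delta> h K L"
  using direction_sum_bound_mono[of 0 p 0 s 0 \<delta> 0 h 0 L K] assms
  by (simp add: direction_sum_bound_def)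

lemma pr_le_growth:
  assumes eps: "0 < eps" "eps < 1" and c: "1 < c" and mn: "1 \<le> m" "m < n"
    and side_m: "3 \<le> side eps c m" and pred: "2 \<le> growth (1 + eps) (real n - 1)"
  shows "real (pr eps c m) \<le> growth (1 + eps) (real m) / c"
    "real (pr eps c m) \<le> growth (1 + eps) (real n - 1) / c"
    "ln (real (pr eps c m)) \<le> real n"
proof -
  have p: "pr eps c m < side eps c m" "0 < pr eps c m"
    using prime_pr[OF side_m] by (simp_all add: prime_gt_0_nat)
  then show "real (pr eps c m) \<le> growth (1 + eps) (real m) / c"
    "real (pr eps c m) \<le> growth (1 + eps) (real n - 1) / c"
    using side_le_growth[of c eps m] side_le_growth_pred[OF eps less_imp_le[OF c] mn pred] c by simp_all
  have "int (pr eps c m) < 2 ^ m" using p side_less_two_pow[OF c eps(1), of m] by simp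
  then have "real (pr eps c m) < 2 ^ m" by (metis of_int_less_iff of_int_numeral of_int_of_nat_eq of_int_power)
  also have "\<dots> \<le> 2 ^ n" using mn by (intro power_increasing) auto
  finally have "ln (real (pr eps c m)) \<le> real n * ln 2"
    using p by (simp add: ln_realpow[symmetric] ln_less_cancel_iff)
  also have "\<dots> \<le> real n" using ln_2_less_1 by (simp add: mult_left_le)
  finally show "ln (real (pr eps c m)) \<le> real n" .
qed

lemma card_secant_points_Qsq_le:
  assumes eps: "0 < eps" "eps < 1" and c: "1 < c" and mn: "1 \<le> m" "m < n"
    and side_m: "3 \<le> side eps c m" and P: "P \<subseteq> Qsq eps c m" "P \<subseteq> parab eps c m a b"
    and pred: "2 \<le> growth (1 + eps) (real n - 1)"
    and gap: "growth (1 + eps) (real n - 1) < 2 ^ n / 2"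
    and height: "growth eps (real n - 1) + growth (1 + eps) (real n) + 1 < growth eps (real n)"
    and slope_less: "slope_bound eps n < 1" and K: "2 \<le> real n powr (eps + 1 / 3)"
  shows "real (card (secant_points P (Qsq eps c n)))
    \<le> growth (1 + eps) (real m) / c * secant_factor c eps n"
proof -
  define p where "p = pr eps c m"
  define K where "K = real n powr (eps + 1 / 3)"
  have p: "prime p" "0 < p" using prime_pr[OF side_m] by (simp_all add: p_def prime_gt_0_nat)
  note p_le = pr_le_growth[OF eps c mn side_m pred, folded p_def]
  obtain lo hi where lo: "0 < lo" "lo \<le> hi" and hi: "hi \<le> slope_bound eps n"
    and width: "hi - lo \<le> slope_width_bound c eps n"
    and window: "\<And>u z. u \<in> Qsq eps c m \<Longrightarrow> z \<in> Qsq eps c n \<Longrightarrow>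
      fst u < fst z \<and> lo \<le> slope u z \<and> slope u z \<le> hi"
    using slope_window_Qsq[OF eps less_imp_le[OF c] mn pred gap height] by blast
  have "real (card (secant_points P (Qsq eps c n)))
      \<le> (\<Sum>(k, j)\<in>slope_dirs p lo hi. real p / real_of_int k * (real (side eps c n) / real_of_int k + 1))"
  proof (rule card_secant_points_le[OF p(1)])
    show "P \<subseteq> mod_parabola p (2 ^ m) (Ytop eps m) a b" using P(2) by (simp add: p_def parab_eq_mod_parabola)
  qed (use P(1) window finite_square slope_less lo hi in \<open>auto simp: Qsq_eq_square square_def\<close>)
  also have "\<dots> \<le> real p * direction_sum_bound p (side eps c n) (hi - lo) hi K (ln p + 1)"
    using lo hi slope_less K p by (intro sum_slope_dirs_le) (auto simp: K_def)
  also have "\<dots> \<le> growth (1 + eps) (real m) / c * secant_factor c eps n"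
    unfolding secant_factor_def K_def[symmetric]
  proof (rule mult_mono)
    show "direction_sum_bound (real p) (real (side eps c n)) (hi - lo) hi K (ln (real p) + 1)
      \<le> direction_sum_bound (growth (1 + eps) (real n - 1) / c) (growth (1 + eps) (real n) / c)
           (slope_width_bound c eps n) (slope_bound eps n) K (real n + 1)"
      using lo hi width p p_le K mn side_le_growth[of c eps n] c
      by (intro direction_sum_bound_mono) (auto simp: K_def)
    show "0 \<le> direction_sum_bound (real p) (real (side eps c n)) (hi - lo) hi K (ln (real p) + 1)"
      using lo p K mn by (intro direction_sum_bound_nonneg) (auto simp: K_def)
  qed (use p_le c growth_pos[of "real m" "1 + eps"] mn in simp_all)
  finally show ?thesis .
qed

lemma eventually_large_index:
  assumes "0 < eps" "eps < 1"
  shows "\<forall>\<^sub>F n in sequentially.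
    2 \<le> growth (1 + eps) (real n - 1) \<and> growth (1 + eps) (real n - 1) < 2 ^ n / 2 \<and>
    growth eps (real n - 1) + growth (1 + eps) (real n) + 1 < growth eps (real n) \<and>
    slope_bound eps n < 1 \<and> 2 \<le> real n powr (eps + 1 / 3) \<and>
    9 * 2 ^ 9 < 2 / 5 * growth (1 + eps) (real n)"
  using assms unfolding slope_bound_def growth_def by (intro eventually_conj; real_asymp)

lemma direction_sum_bound_le:
  assumes "\<delta> * K^2 * h * (s * h) \<le> T / 16" "\<delta> * K^2 * h \<le> T / 16" "h * (s * h) \<le> T / 16"
    "h \<le> T / 16" "p * \<delta> \<le> T / 16" "2 * s / K \<le> T / 16" "0 \<le> L" "L \<le> T / 16" "s * \<delta> * L \<le> T / 2"
  shows "direction_sum_bound p s \<delta> h K L \<le> T"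
proof -
  have "direction_sum_bound p s \<delta> h K L
      = \<delta> * K^2 * h * (s * h) + \<delta> * K^2 * h + h * (s * h) + h + p * \<delta> + 2 * s / K + L + s * \<delta> * L"
    by (simp add: direction_sum_bound_def algebra_simps)
  then show ?thesis using assms by linarith
qed

lemma eventually_secant_factor_le:
  assumes eps: "0 < eps" "eps < 1" and c: "0 < c"
  shows "\<forall>\<^sub>F n in sequentially.
    secant_factor c eps n \<le> 8 * real n * 2 ^ n / (c^2 * real n powr (2 + 2 * eps))"
proof -
  define T where "T n = 8 * real n * 2 ^ n / (c^2 * real n powr (2 + 2 * eps))" for n :: nat
  define p s \<delta> h K where "p n = growth (1 + eps) (real n - 1) / c"
    and "s n = growth (1 + eps) (real n) / c" and "\<delta> n = slope_width_bound c eps n"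
    and "h n = slope_bound eps n" and "K n = real n powr (eps + 1 / 3)" for n :: nat
  have minor: "\<forall>\<^sub>F n in sequentially. \<delta> n * K n ^ 2 * h n * (s n * h n) \<le> T n / 16"
    "\<forall>\<^sub>F n in sequentially. \<delta> n * K n ^ 2 * h n \<le> T n / 16"
    "\<forall>\<^sub>F n in sequentially. h n * (s n * h n) \<le> T n / 16"
    "\<forall>\<^sub>F n in sequentially. h n \<le> T n / 16"
    "\<forall>\<^sub>F n in sequentially. p n * \<delta> n \<le> T n / 16"
    "\<forall>\<^sub>F n in sequentially. 2 * s n / K n \<le> T n / 16"
    "\<forall>\<^sub>F n in sequentially. real n + 1 \<le> T n / 16"
    using eps c unfolding T_def p_def s_def \<delta>_def h_def K_def slope_width_bound_def slope_bound_def growth_def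
    by real_asymp+
  text \<open>The dominant term s \<delta> L is about 3 n 2^n / (c n^(1 + eps))^2, so its constant matters;
    it is compared with the factor 1 / c^2 cleared.\<close>
  have "\<forall>\<^sub>F n in sequentially.
      growth (1 + eps) (real n) * ((growth (1 + eps) (real n - 1) + growth (1 + eps) (real n))
        * (growth eps (real n) / (2 ^ n / 2) + 1) / (2 ^ n / 2 - growth (1 + eps) (real n - 1))) * (real n + 1)
      \<le> 4 * real n * 2 ^ n / real n powr (2 + 2 * eps)"
    using eps unfolding growth_def by real_asymp
  then have major: "\<forall>\<^sub>F n in sequentially. s n * \<delta> n * (real n + 1) \<le> T n / 2"
  proof eventually_elim
    case (elim n)
    have "s n * \<delta> n * (real n + 1) = growth (1 + eps) (real n) * ((growth (1 + eps) (real n - 1)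
        + growth (1 + eps) (real n)) * (growth eps (real n) / (2 ^ n / 2) + 1)
        / (2 ^ n / 2 - growth (1 + eps) (real n - 1))) * (real n + 1) / c^2"
      unfolding s_def \<delta>_def slope_width_bound_def using c by (simp add: field_simps power2_eq_square)
    also have "\<dots> \<le> 4 * real n * 2 ^ n / real n powr (2 + 2 * eps) / c^2"
      using elim c by (intro divide_right_mono) auto
    also have "\<dots> = T n / 2" unfolding T_def by (simp add: field_simps)
    finally show ?case .
  qed
  from minor major show ?thesis
  proof eventually_elim
    case (elim n)
    then have "direction_sum_bound (p n) (s n) (\<delta> n) (h n) (K n) (real n + 1) \<le> T n"
      by (intro direction_sum_bound_le) auto
    then show ?case by (simp add: secant_factor_def p_def s_def \<delta>_def h_def K_def T_def)
  qed
qed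

lemma eventually_card_secant_points_Qsq_le:
  assumes eps: "0 < eps" "eps < 1" and c: "1 < c"
  shows "\<forall>\<^sub>F n in sequentially. \<forall>m P a b.
    1 \<le> m \<and> m < n \<and> 3 \<le> side eps c m \<and> P \<subseteq> Qsq eps c m \<and> P \<subseteq> parab eps c m a b \<longrightarrow>
    real (card (secant_points P (Qsq eps c n)))
      \<le> 8 * 2 ^ (m + n) / (c ^ 3 * real n powr (2 + 2 * eps) * real m powr (1 + eps)) * real n"
proof (rule eventually_mono[OF eventually_conj[OF eventually_large_index[OF eps]
      eventually_secant_factor_le[OF eps, of c]]], use c in simp, safe)
  fix n m :: nat and P a b
  assume large: "2 \<le> growth (1 + eps) (real n - 1)" "growth (1 + eps) (real n - 1) < 2 ^ n / 2"
    "growth eps (real n - 1) + growth (1 + eps) (real n) + 1 < growth eps (real n)"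
    "slope_bound eps n < 1" "2 \<le> real n powr (eps + 1 / 3)"
    and factor: "secant_factor c eps n \<le> 8 * real n * 2 ^ n / (c^2 * real n powr (2 + 2 * eps))"
    and m: "1 \<le> m" "m < n" "3 \<le> side eps c m" and P: "P \<subseteq> Qsq eps c m" "P \<subseteq> parab eps c m a b"
  have "real (card (secant_points P (Qsq eps c n))) \<le> growth (1 + eps) (real m) / c * secant_factor c eps n"
    by (rule card_secant_points_Qsq_le[OF eps c m P large])
  also have "\<dots> \<le> growth (1 + eps) (real m) / c * (8 * real n * 2 ^ n / (c^2 * real n powr (2 + 2 * eps)))"
    using factor c growth_pos[of "real m" "1 + eps"] m by (intro mult_left_mono) auto
  also have "\<dots> = 8 * 2 ^ (m + n) / (c ^ 3 * real n powr (2 + 2 * eps) * real m powr (1 + eps)) * real n"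
    by (simp add: growth_of_nat power_add field_simps power2_eq_square power3_eq_cube)
  finally show "real (card (secant_points P (Qsq eps c n)))
      \<le> 8 * 2 ^ (m + n) / (c ^ 3 * real n powr (2 + 2 * eps) * real m powr (1 + eps)) * real n" .
qed

lemma sum_growth_less:
  assumes eps: "0 < eps" "eps \<le> 1" and n0: "1 \<le> n0" and n: "10 \<le> n"
    and large: "9 * 2 ^ 9 < 2 / 5 * growth (1 + eps) (real n)"
  shows "(\<Sum>m\<in>{n0..<n}. growth (1 + eps) (real m)) < 2 * growth (1 + eps) (real n)"
proof -
  let ?g = "\<lambda>m. growth (1 + eps) (real m)"
  have g: "0 \<le> ?g m" for m by (simp add: growth_def)
  have tail: "(\<Sum>m\<in>{10..<k}. ?g m) \<le> 8 / 5 * ?g k" if "10 \<le> k" for k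
    using that
  proof (induction k rule: dec_induct)
    case (step k)
    have "13 / 8 * ((real k + 1) / real k) powr (1 + eps) \<le> 13 / 8 * ((10 + 1) / 10) powr 2"
      using succ_ratio_powr_le[of 10 "real k" "1 + eps" 2] step.hyps eps by simp
    also have "\<dots> \<le> 2" by (simp add: powr_numeral power2_eq_square)
    finally have "13 / 8 * ?g k \<le> ?g (Suc k)"
      using growth_step[of "real k" "13 / 8" "1 + eps"] step.hyps by (simp add: add.commute)
    moreover have "(\<Sum>m\<in>{10..<Suc k}. ?g m) = (\<Sum>m\<in>{10..<k}. ?g m) + ?g k"
      using step.hyps by simp
    ultimately show ?case using step.IH by linarith
  qed (simp add: growth_def)
  have head: "?g m \<le> 2 ^ 9" if "m \<in> {1..<10}" for m
  proof -
    have "1 \<le> real m powr (1 + eps)" using that eps by (simp add: ge_one_powr_ge_zero)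
    then have "?g m \<le> 2 ^ m" by (simp add: growth_of_nat divide_le_eq)
    also have "(2::real) ^ m \<le> 2 ^ 9" using that by (intro power_increasing) auto
    finally show ?thesis .
  qed
  have "(\<Sum>m\<in>{n0..<n}. ?g m) \<le> (\<Sum>m\<in>{1..<n}. ?g m)"
    using n0 g by (intro sum_mono2) auto
  also have "\<dots> = (\<Sum>m\<in>{1..<10}. ?g m) + (\<Sum>m\<in>{10..<n}. ?g m)"
    using n by (simp add: sum.atLeastLessThan_concat)
  also have "\<dots> \<le> 9 * 2 ^ 9 + 8 / 5 * ?g n"
  proof -
    have "(\<Sum>m\<in>{1..<10}. ?g m) \<le> real (card {1..<10::nat}) * 2 ^ 9"
      by (rule sum_bounded_above) (rule head)
    then show ?thesis using tail[OF n] by simp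
  qed
  also have "\<dots> < 2 * ?g n" using large by simp
  finally show ?thesis .
qed

section \<open>Red points\<close>

lemma valid_construction_index_ge:
  assumes S: "valid_construction eps c n0 a b S" and c: "1 < c" and eps: "0 < eps"
    and nonempty: "S \<inter> Qsq eps c m \<noteq> {}"
  shows "n0 \<le> m"
proof -
  have "S \<subseteq> (\<Union>k\<in>{n0..}. Qsq eps c k)"
    using S unfolding valid_construction_def by (rule conjunct1)
  then obtain z k where "z \<in> Qsq eps c m" "n0 \<le> k" "z \<in> Qsq eps c k"
    using nonempty by blast
  then show "n0 \<le> m" using Qsq_disjoint[OF c eps] by blast
qed

lemma valid_construction_subset_parab:
  assumes "valid_construction eps c n0 a b S" "n0 \<le> m"
  shows "S \<inter> Qsq eps c m \<subseteq> parab eps c m (a m) (b m)"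
proof -
  have "\<forall>k\<ge>n0. \<exists>f. S \<inter> Qsq eps c k = parab eps c k (a k) (b k)
      - f ` mixed_triples (parab eps c k (a k) (b k)) (S_before eps c n0 S k)"
    using assms(1) unfolding valid_construction_def by blast
  then show ?thesis using assms(2) by blast
qed

lemma card_red_le:
  assumes S: "valid_construction eps c n0 a b S" and c: "1 < c" and eps: "0 < eps"
    and n0: "1 \<le> n0" and sides: "\<forall>m\<ge>n0. 3 \<le> side eps c m"
    and bound: "\<forall>m P a b. 1 \<le> m \<and> m < n \<and> 3 \<le> side eps c m \<and> P \<subseteq> Qsq eps c m \<and> P \<subseteq> parab eps c m a b
      \<longrightarrow> real (card (secant_points P (Qsq eps c n))) \<le> B m"
  shows "real (card (red eps c S n)) \<le> (\<Sum>m\<in>{n0..<n}. B m)"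
proof -
  have "red eps c S n \<subseteq> (\<Union>m\<in>{n0..<n}. secant_points (S \<inter> Qsq eps c m) (Qsq eps c n))"
  proof
    fix z assume "z \<in> red eps c S n"
    then obtain m where m: "m < n" "z \<in> secant_points (S \<inter> Qsq eps c m) (Qsq eps c n)"
      unfolding red_eq_Union_secant_points by blast
    then have "S \<inter> Qsq eps c m \<noteq> {}" unfolding secant_points_def by blast
    then have "n0 \<le> m" by (rule valid_construction_index_ge[OF S c eps])
    with m show "z \<in> (\<Union>m\<in>{n0..<n}. secant_points (S \<inter> Qsq eps c m) (Qsq eps c n))" by auto
  qed
  moreover have "finite (secant_points P (Qsq eps c n))" for P
    by (rule finite_subset[OF _ finite_square]) (auto simp: secant_points_def Qsq_eq_square)
  ultimately have "card (red eps c S n) \<le> card (\<Union>m\<in>{n0..<n}. secant_points (S \<inter> Qsq eps c m) (Qsq eps c n))"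
    by (intro card_mono) auto
  also have "\<dots> \<le> (\<Sum>m\<in>{n0..<n}. card (secant_points (S \<inter> Qsq eps c m) (Qsq eps c n)))"
    by (rule card_UN_le) simp
  finally have "real (card (red eps c S n))
      \<le> (\<Sum>m\<in>{n0..<n}. real (card (secant_points (S \<inter> Qsq eps c m) (Qsq eps c n))))"
    by (simp flip: of_nat_sum)
  also have "\<dots> \<le> (\<Sum>m\<in>{n0..<n}. B m)"
  proof (rule sum_mono)
    fix m assume "m \<in> {n0..<n}"
    then have "1 \<le> m \<and> m < n \<and> 3 \<le> side eps c m \<and> S \<inter> Qsq eps c m \<subseteq> Qsq eps c m \<and>
        S \<inter> Qsq eps c m \<subseteq> parab eps c m (a m) (b m)"
      using n0 sides valid_construction_subset_parab[OF S, of m] by auto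
    with bound show "real (card (secant_points (S \<inter> Qsq eps c m) (Qsq eps c n))) \<le> B m" by blast
  qed
  finally show ?thesis .
qed

lemma sum_secant_bounds_less:
  assumes eps: "0 < eps" "eps < 1" and c: "0 < c" and n0: "1 \<le> n0" and n: "10 \<le> n"
    and large: "9 * 2 ^ 9 < 2 / 5 * growth (1 + eps) (real n)"
  shows "(\<Sum>m\<in>{n0..<n}. 8 * 2 ^ (m + n) / (c ^ 3 * real n powr (2 + 2 * eps) * real m powr (1 + eps)) * real n)
    < 16 * 2 ^ (n + n) / (c ^ 3 * real n powr (2 + 2 * eps) * real n powr (1 + eps)) * real n"
proof -
  define F where "F = 8 * 2 ^ n * real n / (c ^ 3 * real n powr (2 + 2 * eps))"
  have term_eq: "8 * 2 ^ (m + n) / (c ^ 3 * real n powr (2 + 2 * eps) * real m powr (1 + eps)) * real n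
      = F * growth (1 + eps) (real m)" for m
    by (simp add: F_def growth_of_nat power_add field_simps)
  have "0 < F" using n c by (simp add: F_def)
  then have "F * (\<Sum>m\<in>{n0..<n}. growth (1 + eps) (real m)) < F * (2 * growth (1 + eps) (real n))"
    using sum_growth_less[OF eps(1) _ n0 n large] eps by simp
  moreover have "16 * 2 ^ (n + n) / (c ^ 3 * real n powr (2 + 2 * eps) * real n powr (1 + eps)) * real n
      = F * (2 * growth (1 + eps) (real n))"
    using term_eq[of n] by simp
  ultimately show ?thesis unfolding term_eq by (simp add: sum_distrib_left)
qed

theorem corollary3p7:
  fixes eps c :: real and n0 :: nat and a b :: "nat \<Rightarrow> int" and S :: "(int \<times> int) set"
  assumes "0 < eps" "eps < 1" "c \<ge> 12 / eps"
    and "n0 \<ge> 1" "\<forall>n\<ge>n0. side eps c n \<ge> 3"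
    and "valid_construction eps c n0 a b S"
  shows "\<forall>\<^sub>F n in sequentially.
     real (card (red eps c S n))
       \<le> (\<Sum>m\<in>{n0..<n}. 8 * 2 ^ (m + n) / (c ^ 3 * real n powr (2 + 2 * eps) * real m powr (1 + eps)) * real n)
   \<and> (\<Sum>m\<in>{n0..<n}. 8 * 2 ^ (m + n) / (c ^ 3 * real n powr (2 + 2 * eps) * real m powr (1 + eps)) * real n)
       < 16 * 2 ^ (n + n) / (c ^ 3 * real n powr (2 + 2 * eps) * real n powr (1 + eps)) * real n"
proof -
  have eps: "0 < eps" "eps < 1" using assms(1,2) .
  have "12 < 12 / eps" using eps by (simp add: field_simps)
  then have c: "1 < c" using assms(3) by linarith
  have "\<forall>\<^sub>F n in sequentially. 10 \<le> n \<and> 9 * 2 ^ 9 < 2 / 5 * growth (1 + eps) (real n)"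
    using eventually_large_index[OF eps] eventually_ge_at_top[of 10]
    by eventually_elim auto
  then show ?thesis
    using eventually_card_secant_points_Qsq_le[OF eps c]
  proof eventually_elim
    case (elim n)
    then show ?case
      using card_red_le[OF assms(6) c eps(1) assms(4,5)] sum_secant_bounds_less[OF eps _ assms(4)] c
      by auto
  qed
qed

end
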